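(* For any $\alpha>1$, $\mathcal{D}_\alpha\in\{\mathcal{F}_\alpha,\mathcal{P}_\alpha\}$ and learning rate $\eta>0$, FTPL with geometric resampling with perturbation distribution $\mathcal{D}_\alpha$ satisfies $$\mathcal{R}(T)\le\sum_{t=1}^T\mathbb{E}\left[\langle\hat\ell_t,w_t-w_{t+1}\rangle\right]+\frac{\left(\frac{\alpha}{\alpha-1}m^{1-\frac1\alpha}+\Gamma\left(1-\frac1\alpha\right)\right)(d+1)^{\frac1\alpha}+m}{\eta}\quad\text{if }\mathcal{D}_\alpha=\mathcal{F}_\alpha,$$ $$\mathcal{R}(T)\le\sum_{t=1}^T\mathbb{E}\left[\langle\hat\ell_t,w_t-w_{t+1}\rangle\right]+\frac{\left(\frac{\alpha}{\alpha-1}m^{1-\frac1\alpha}+\Gamma\left(1-\frac1\alpha\right)\right)(d+1)^{\frac1\alpha}}{\eta}\quad\text{if }\mathcal{D}_\alpha=\mathcal{P}_\alpha.$$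
   Context: Size-invariant semi-bandit: integers $1\le m\le d$, horizon $T$, action set $\mathcal{A}=\{a\in\{0,1\}^d:\|a\|_1=m\}$. In each round $t\in[T]$ an adversary chooses $\ell_t\in[0,1]^d$ (possibly depending on the past), the learner chooses $a_t\in\mathcal{A}$, incurs $\langle\ell_t,a_t\rangle$ and observes $\ell_{t,i}$ for $i$ with $a_{t,i}=1$. Pseudo-regret $\mathcal{R}(T)=\mathbb{E}[\sum_{t=1}^T\langle\ell_t,a_t-a^*\rangle]$ with $a^*\in\arg\min_{a\in\mathcal{A}}\mathbb{E}[\sum_t\langle\ell_t,a\rangle]$. Fréchet $\mathcal{F}_\alpha$: CDF $F(x)=e^{-1/x^\alpha}$, $x\ge0$; Pareto $\mathcal{P}_\alpha$: CDF $F(x)=1-x^{-\alpha}$, $x\ge1$. FTPL with geometric resampling: $\hat L_1=0$; in round $t$ sample $r_t$ with i.i.d. coordinates from the perturbation distribution $\mathcal{D}$, play $a_t\in\arg\min_{a\in\mathcal{A}}a^\top(\eta\hat L_t-r_t)$; GR: $K=0$, $s=a_t$; repeat {$K\leftarrow K+s$; draw fresh $r'$ with i.i.d. coordinates from $\mathcal{D}$; $a'\in\arg\min_{a\in\mathcal{A}}a^\top(\eta\hat L_t-r')$; $s\leftarrow s\circ(\mathbf 1_d-a')$} until $s=0$; $\widehat{w_{t,i}^{-1}}=K_i$ for $a_{t,i}=1$; $\hat\ell_t=\sum_{i:a_{t,i}=1}\ell_{t,i}\widehat{w_{t,i}^{-1}}e_i$, $\hat L_{t+1}=\hat L_t+\hat\ell_t$.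 For $\lambda\in[0,\infty)^d$, $\phi_i(\lambda;\mathcal{D})$ is the probability, for $r$ with i.i.d. coordinates from $\mathcal{D}$, that $r_i-\lambda_i$ is among the $m$ largest of $\{r_j-\lambda_j:j\in[d]\}$; $\phi=(\phi_1,\dots,\phi_d)$ and $w_t=\phi(\eta\hat L_t;\mathcal{D})$ (the probability vector of selecting each base-arm in round $t$). $\Gamma$ is the gamma function. *)

theory Defs
  imports "HOL-Probability.Probability"
begin

text \<open>Base-arms are the indices 0..d-1; an action a in {0,1}^d with |a|_1 = m is
represented by its support, a subset of {..<d} of cardinality m.
Rounds are indexed 0..T-1 internally (round t here = round t+1 of the paper).\<close>

definition actions :: "nat \<Rightarrow> nat \<Rightarrow> nat set set" where
  "actions d m = {A. A \<subseteq> {..<d} \<and> card A = m}"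

definition frechet_cdf :: "real \<Rightarrow> real \<Rightarrow> real" where
  "frechet_cdf \<alpha> x = (if x > 0 then exp (- (x powr (-\<alpha>))) else 0)"

definition pareto_cdf :: "real \<Rightarrow> real \<Rightarrow> real" where
  "pareto_cdf \<alpha> x = (if x \<ge> 1 then 1 - x powr (-\<alpha>) else 0)"

text \<open>This is an element of argmax over actions of the sum of v over the action, i.e.
with v = r - eta*L an element of argmin_a a^T(eta L - r).\<close>
definition topm :: "nat \<Rightarrow> nat \<Rightarrow> (nat \<Rightarrow> real) \<Rightarrow> nat set" where
  "topm d m v = {i. i < d \<and> card {j. j < d \<and> (v j > v i \<or> (v j = v i \<and> j < i))} < m}"

definition play :: "nat \<Rightarrow> nat \<Rightarrow> real \<Rightarrow> (nat \<Rightarrow> real) \<Rightarrow> (nat \<Rightarrow> real) \<Rightarrow> nat set" where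
  "play d m \<eta> L r = topm d m (\<lambda>i. r i - \<eta> * L i)"

text \<open>Sample space: omega (t,k,i) is coordinate i of the k-th perturbation vector drawn in
round t; k = 0 is the perturbation r_t, k >= 1 are the fresh draws r' of geometric resampling.\<close>
type_synonym omega = "nat \<times> nat \<times> nat \<Rightarrow> real"

definition Omega :: "real measure \<Rightarrow> omega measure" where
  "Omega D = (\<Pi>\<^sub>M _\<in>(UNIV :: (nat \<times> nat \<times> nat) set). D)"

definition pert :: "omega \<Rightarrow> nat \<Rightarrow> nat \<Rightarrow> nat \<Rightarrow> real" where
  "pert \<omega> t k = (\<lambda>i. \<omega> (t, k, i))"

text \<open>Geometric resampling counter: K_i = number of resampling iterations until coordinate i
is selected by a fresh draw (the loop adds s to K and removes i from s when a'_i = 1).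
On the null event that this never happens we set it to 0.\<close>
definition Kcount :: "nat \<Rightarrow> nat \<Rightarrow> real \<Rightarrow> (nat \<Rightarrow> real) \<Rightarrow> omega \<Rightarrow> nat \<Rightarrow> nat \<Rightarrow> nat" where
  "Kcount d m \<eta> L \<omega> t i =
     (if \<exists>k\<ge>1. i \<in> play d m \<eta> L (pert \<omega> t k)
      then (LEAST k. k \<ge> 1 \<and> i \<in> play d m \<eta> L (pert \<omega> t k)) else 0)"

definition est :: "nat \<Rightarrow> nat \<Rightarrow> real \<Rightarrow> (nat \<Rightarrow> real) \<Rightarrow> (nat \<Rightarrow> real) \<Rightarrow> omega \<Rightarrow> nat \<Rightarrow> nat \<Rightarrow> real" where
  "est d m \<eta> L lt \<omega> t i =
     (if i \<in> play d m \<eta> L (pert \<omega> t 0) then lt i * real (Kcount d m \<eta> L \<omega> t i) else 0)"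

text \<open>The adversary: ell t omega i is the loss of base-arm i in round t (chosen as a function
of the past).  Lhat t omega = cumulative estimated loss before round t.\<close>
primrec Lhat :: "nat \<Rightarrow> nat \<Rightarrow> real \<Rightarrow> (nat \<Rightarrow> omega \<Rightarrow> nat \<Rightarrow> real) \<Rightarrow> nat \<Rightarrow> omega \<Rightarrow> nat \<Rightarrow> real" where
  "Lhat d m \<eta> ell 0 \<omega> = (\<lambda>i. 0)"
| "Lhat d m \<eta> ell (Suc t) \<omega> =
     (\<lambda>i. Lhat d m \<eta> ell t \<omega> i + est d m \<eta> (Lhat d m \<eta> ell t \<omega>) (ell t \<omega>) \<omega> t i)"

definition lhat :: "nat \<Rightarrow> nat \<Rightarrow> real \<Rightarrow> (nat \<Rightarrow> omega \<Rightarrow> nat \<Rightarrow> real) \<Rightarrow> nat \<Rightarrow> omega \<Rightarrow> nat \<Rightarrow> real" where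
  "lhat d m \<eta> ell t \<omega> = est d m \<eta> (Lhat d m \<eta> ell t \<omega>) (ell t \<omega>) \<omega> t"

definition action :: "nat \<Rightarrow> nat \<Rightarrow> real \<Rightarrow> (nat \<Rightarrow> omega \<Rightarrow> nat \<Rightarrow> real) \<Rightarrow> nat \<Rightarrow> omega \<Rightarrow> nat set" where
  "action d m \<eta> ell t \<omega> = play d m \<eta> (Lhat d m \<eta> ell t \<omega>) (pert \<omega> t 0)"

definition phi :: "nat \<Rightarrow> nat \<Rightarrow> real measure \<Rightarrow> (nat \<Rightarrow> real) \<Rightarrow> nat \<Rightarrow> real" where
  "phi d m D lam i =
     measure (\<Pi>\<^sub>M _\<in>{..<d}. D) {r \<in> space (\<Pi>\<^sub>M _\<in>{..<d}. D). i \<in> topm d m (\<lambda>j. r j - lam j)}"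

definition wprob :: "nat \<Rightarrow> nat \<Rightarrow> real \<Rightarrow> real measure \<Rightarrow> (nat \<Rightarrow> omega \<Rightarrow> nat \<Rightarrow> real) \<Rightarrow> nat \<Rightarrow> omega \<Rightarrow> nat \<Rightarrow> real" where
  "wprob d m \<eta> D ell t \<omega> = phi d m D (\<lambda>j. \<eta> * Lhat d m \<eta> ell t \<omega> j)"

definition admissible_adv :: "nat \<Rightarrow> real measure \<Rightarrow> (nat \<Rightarrow> omega \<Rightarrow> nat \<Rightarrow> real) \<Rightarrow> bool" where
  "admissible_adv d D ell \<longleftrightarrow>
     (\<forall>t \<omega> i. i < d \<longrightarrow> 0 \<le> ell t \<omega> i \<and> ell t \<omega> i \<le> 1) \<and>
     (\<forall>t \<omega> \<omega>'. (\<forall>s k i. s < t \<longrightarrow> \<omega> (s, k, i) = \<omega>' (s, k, i)) \<longrightarrow> ell t \<omega> = ell t \<omega>') \<and>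
     (\<forall>t i. (\<lambda>\<omega>. ell t \<omega> i) \<in> borel_measurable (Omega D))"

definition regret :: "nat \<Rightarrow> nat \<Rightarrow> real \<Rightarrow> real measure \<Rightarrow> (nat \<Rightarrow> omega \<Rightarrow> nat \<Rightarrow> real) \<Rightarrow> nat \<Rightarrow> real" where
  "regret d m \<eta> D ell T =
     (\<integral>\<omega>. (\<Sum>t<T. \<Sum>i\<in>action d m \<eta> ell t \<omega>. ell t \<omega> i) \<partial>Omega D)
     - Min ((\<lambda>A. \<integral>\<omega>. (\<Sum>t<T. \<Sum>i\<in>A. ell t \<omega> i) \<partial>Omega D) ` actions d m)"

definition stab_term :: "nat \<Rightarrow> nat \<Rightarrow> real \<Rightarrow> real measure \<Rightarrow> (nat \<Rightarrow> omega \<Rightarrow> nat \<Rightarrow> real) \<Rightarrow> nat \<Rightarrow> real" where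
  "stab_term d m \<eta> D ell T =
     (\<Sum>t<T. \<integral>\<omega>. (\<Sum>i<d. lhat d m \<eta> ell t \<omega> i *
        (wprob d m \<eta> D ell t \<omega> i - wprob d m \<eta> D ell (Suc t) \<omega> i)) \<partial>Omega D)"

end

theory Submission
  imports Defs
begin

(*
  Let w_t = phi(eta Lhat_t) be the selection probabilities of round t. Given the
  past, the resampling count of a played arm i is geometric with success probability w_{t,i},
  so the estimate lhat_t is conditionally unbiased: E <ell_t, a_t> = E <lhat_t, w_t> and
  E <ell_t, a> = E <lhat_t, a> for every fixed action a. Hence the regret is the stability
  term plus sum_t E <lhat_t, w_{t+1}> - E <Lhat_{T+1}, a*>. For a fixed perturbation r,
  be-the-leader bounds eta times the loss of the leaders of the following rounds, minus
  eta <Lhat_{T+1}, a*>, by the top-m sum of r (using r > 0); averaging over r turns those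
  leaders into w_{t+1}. For c >= 1 the top-m sum is at most m c + sum_i (r_i - c)^+, and the
  tail bound P(r_i > x) <= x^(-alpha) gives E (r_i - c)^+ <= c^(1-alpha) / (alpha - 1). The
  choice c = (d/m)^(1/alpha) yields alpha/(alpha-1) m^(1-1/alpha) d^(1/alpha), which is below
  both stated penalties.
*)

section \<open>Top-m selection\<close>

definition ranked_before :: "(nat \<Rightarrow> real) \<Rightarrow> nat \<Rightarrow> nat \<Rightarrow> bool" where
  "ranked_before v j i \<longleftrightarrow> v j > v i \<or> (v j = v i \<and> j < i)"

definition rank_of :: "nat \<Rightarrow> (nat \<Rightarrow> real) \<Rightarrow> nat \<Rightarrow> nat" where
  "rank_of d v i = card {j. j < d \<and> ranked_before v j i}"

lemma topm_eq_rank_of: "topm d m v = {i. i < d \<and> rank_of d v i < m}"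
  unfolding topm_def rank_of_def ranked_before_def by simp

lemma topm_subset: "topm d m v \<subseteq> {..<d}"
  unfolding topm_def by auto

lemma topm_cong:
  assumes "\<And>j. j < d \<Longrightarrow> v j = v' j"
  shows "topm d m v = topm d m v'"
proof -
  have "rank_of d v i = rank_of d v' i" if "i < d" for i
    unfolding rank_of_def ranked_before_def using assms that by (intro arg_cong[where f = card]) auto
  then show ?thesis
    unfolding topm_eq_rank_of by auto
qed

lemma sum_topm_eq_sum_lessThan: "(\<Sum>i\<in>topm d m v. f i) = (\<Sum>i<d. if i \<in> topm d m v then f i else 0)"
  by (simp add: sum.If_cases Int_absorb1[OF topm_subset])

lemma ranked_before_trans: "ranked_before v a b \<Longrightarrow> ranked_before v b c \<Longrightarrow> ranked_before v a c"
  and ranked_before_irrefl: "\<not> ranked_before v a a"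
  and ranked_before_total: "a \<noteq> b \<Longrightarrow> ranked_before v a b \<or> ranked_before v b a"
  unfolding ranked_before_def by auto

lemma rank_of_strict_mono:
  assumes "ranked_before v i i'" "i < d"
  shows "rank_of d v i < rank_of d v i'"
proof -
  have "{j. j < d \<and> ranked_before v j i} \<subset> {j. j < d \<and> ranked_before v j i'}"
    using assms ranked_before_trans ranked_before_irrefl by blast
  then show ?thesis unfolding rank_of_def by (intro psubset_card_mono) auto
qed

lemma rank_of_less: assumes "i < d" shows "rank_of d v i < d"
proof -
  have "{j. j < d \<and> ranked_before v j i} \<subseteq> {..<d} - {i}"
    using ranked_before_irrefl by auto
  then have "rank_of d v i \<le> card ({..<d} - {i})"
    unfolding rank_of_def by (intro card_mono) auto
  then show ?thesis using assms by simp
qed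

lemma inj_on_rank_of: "inj_on (rank_of d v) {..<d}"
  by (rule inj_onI)
    (metis lessThan_iff less_irrefl ranked_before_total rank_of_strict_mono)

lemma image_rank_of: "rank_of d v ` {..<d} = {..<d}"
  using rank_of_less by (intro endo_inj_surj inj_on_rank_of) auto

lemma card_topm: assumes "m \<le> d" shows "card (topm d m v) = m"
proof -
  have "rank_of d v ` topm d m v = {..<m}"
    using image_rank_of[of d v] assms unfolding topm_eq_rank_of by (auto simp: image_iff)
  moreover have "inj_on (rank_of d v) (topm d m v)"
    using inj_on_rank_of topm_subset by (rule inj_on_subset)
  ultimately show ?thesis
    by (metis card_image card_lessThan)
qed

lemma topm_in_actions: "m \<le> d \<Longrightarrow> topm d m v \<in> actions d m"
  using card_topm topm_subset unfolding actions_def by auto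

lemma topm_dominates:
  assumes "i \<in> topm d m v" "j < d" "j \<notin> topm d m v"
  shows "v j \<le> v i"
proof -
  have "rank_of d v i < rank_of d v j" "i \<noteq> j"
    using assms unfolding topm_eq_rank_of by auto
  then have "ranked_before v i j"
    using ranked_before_total rank_of_strict_mono assms(2) by (metis less_asym)
  then show ?thesis unfolding ranked_before_def by auto
qed

lemma sum_le_sum_topm:
  assumes "A \<in> actions d m" "m \<le> d"
  shows "(\<Sum>i\<in>A. v i) \<le> (\<Sum>i\<in>topm d m v. v i)"
proof -
  let ?T = "topm d m v"
  have A: "A \<subseteq> {..<d}" "card A = m" "finite A"
    using assms(1) finite_subset[of A "{..<d}"] unfolding actions_def by auto
  have T: "finite ?T" "card ?T = m"
    using finite_subset[OF topm_subset] card_topm[OF assms(2)] by auto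
  have "card (A - ?T) = card (?T - A)"
    using card_Diff_subset_Int[of A ?T] card_Diff_subset_Int[of ?T A] A T
    by (simp add: Int_commute)
  then obtain h where h: "bij_betw h (A - ?T) (?T - A)"
    using finite_same_card_bij[of "A - ?T" "?T - A"] A(3) T(1) by blast
  have "(\<Sum>i\<in>A - ?T. v i) \<le> (\<Sum>i\<in>A - ?T. v (h i))"
  proof (rule sum_mono)
    fix a assume a: "a \<in> A - ?T"
    then have "h a \<in> ?T - A"
      using bij_betw_apply[OF h] by blast
    then show "v a \<le> v (h a)"
      using a A(1) topm_dominates[of "h a" d m v a] by blast
  qed
  also have "\<dots> = (\<Sum>i\<in>?T - A. v i)"
    by (rule sum.reindex_bij_betw[OF h])
  finally show ?thesis
    using sum.Int_Diff[OF A(3), of v ?T] sum.Int_Diff[OF T(1), of v A] by (simp add: Int_commute)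
qed

lemma sum_topm_le_excess:
  assumes "m \<le> d"
  shows "(\<Sum>i\<in>topm d m v. r i) \<le> real m * c + (\<Sum>i<d. max 0 (r i - c))"
proof -
  have "(\<Sum>i\<in>topm d m v. r i) \<le> (\<Sum>i\<in>topm d m v. c + max 0 (r i - c))"
    by (rule sum_mono) auto
  also have "\<dots> = real m * c + (\<Sum>i\<in>topm d m v. max 0 (r i - c))"
    using card_topm[OF assms] by (simp add: sum.distrib)
  also have "(\<Sum>i\<in>topm d m v. max 0 (r i - c)) \<le> (\<Sum>i<d. max 0 (r i - c))"
    by (rule sum_mono2) (use topm_subset in auto)
  finally show ?thesis by simp
qed

lemma topm_iff_sum:
  "i \<in> topm d m v \<longleftrightarrow>
     i < d \<and> (\<Sum>j<d. if v j > v i \<or> (v j = v i \<and> j < i) then 1 else 0 :: real) < real m"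
proof -
  have "real (card {j. j < d \<and> (v j > v i \<or> (v j = v i \<and> j < i))})
      = (\<Sum>j<d. if v j > v i \<or> (v j = v i \<and> j < i) then 1 else 0)"
    by (simp add: sum.If_cases Int_def conj_commute)
  then show ?thesis
    unfolding topm_def by (metis (no_types, lifting) mem_Collect_eq of_nat_less_iff)
qed

lemma measurable_topm [measurable]:
  assumes "\<And>j. j < d \<Longrightarrow> f j \<in> borel_measurable M"
  shows "Measurable.pred M (\<lambda>x. i \<in> topm d m (\<lambda>j. f j x))"
proof (cases "i < d")
  case True
  note [measurable] = assms True
  show ?thesis by (subst topm_iff_sum) measurable
next
  case False
  then have "i \<notin> topm d m v" for v
    using topm_subset by blast
  then show ?thesis by simp
qed

section \<open>Be the leader\<close>

lemma be_the_leader: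
  assumes md: "m \<le> d" and A: "A \<in> actions d m" and L: "\<And>s j. L (Suc s) j = L s j + l s j"
  shows "\<eta> * (\<Sum>s<n. \<Sum>i\<in>topm d m (\<lambda>j. r j - \<eta> * L (Suc s) j). l s i)
     \<le> (\<Sum>i\<in>topm d m (\<lambda>j. r j - \<eta> * L 0 j). r i - \<eta> * L 0 i) - (\<Sum>i\<in>A. r i - \<eta> * L n i)"
proof -
  define f where "f s = (\<Sum>i\<in>topm d m (\<lambda>j. r j - \<eta> * L s j). r i - \<eta> * L s i)" for s
  have step: "\<eta> * (\<Sum>i\<in>topm d m (\<lambda>j. r j - \<eta> * L (Suc s) j). l s i) \<le> f s - f (Suc s)" for s
  proof -
    let ?a = "topm d m (\<lambda>j. r j - \<eta> * L (Suc s) j)"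
    have "(\<Sum>i\<in>?a. r i - \<eta> * L s i) \<le> f s"
      unfolding f_def by (rule sum_le_sum_topm[OF topm_in_actions[OF md] md])
    moreover have "f (Suc s) = (\<Sum>i\<in>?a. r i - \<eta> * L s i) - \<eta> * (\<Sum>i\<in>?a. l s i)"
      unfolding f_def L by (simp add: algebra_simps sum_subtractf sum_distrib_left sum.distrib)
    ultimately show ?thesis by simp
  qed
  have "\<eta> * (\<Sum>s<n. \<Sum>i\<in>topm d m (\<lambda>j. r j - \<eta> * L (Suc s) j). l s i) \<le> f 0 - f n"
  proof (induction n)
    case (Suc n)
    then show ?case using step[of n] by (simp add: distrib_left)
  qed simp
  moreover have "(\<Sum>i\<in>A. r i - \<eta> * L n i) \<le> f n"
    unfolding f_def by (rule sum_le_sum_topm[OF A md])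
  ultimately show ?thesis unfolding f_def by simp
qed

section \<open>Heavy tails\<close>

lemma nn_integral_powr_atLeast:
  fixes c \<alpha> :: real
  assumes "c > 0" and "\<alpha> > 1"
  shows "(\<integral>\<^sup>+ y. ennreal (y powr (-\<alpha>)) * indicator {c..} y \<partial>lborel) = ennreal (c powr (1 - \<alpha>) / (\<alpha> - 1))"
proof -
  have "((\<lambda>y. y powr (-\<alpha>)) has_integral -(c powr (-\<alpha>+1)) / (-\<alpha>+1)) {c..}"
    using has_integral_powr_to_inf[of "-\<alpha>" c] assms by simp
  then have "(\<integral>\<^sup>+ y. ennreal (y powr (-\<alpha>)) * indicator {c..} y \<partial>lborel)
      = ennreal (-(c powr (-\<alpha>+1)) / (-\<alpha>+1))"
    by (intro nn_integral_has_integral_lebesgue') auto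
  moreover have "-(c powr (-\<alpha>+1)) / (-\<alpha>+1) = c powr (1 - \<alpha>) / (\<alpha> - 1)"
    using assms by (simp add: field_simps)
  ultimately show ?thesis
    by simp
qed

context real_distribution
begin

lemma measure_greaterThan: "measure M {x<..} = 1 - cdf M x"
proof -
  have "{x<..} = space M - {..x}" by auto
  then show ?thesis by (simp add: prob_compl cdf_def del: space_eq_univ)
qed

lemma ex_cdf_pos: "\<exists>a. 0 < cdf M a"
proof -
  have "\<forall>\<^sub>F x in at_top. 0 < cdf M x"
    using cdf_lim_at_top_prob by (rule order_tendstoD) simp
  then show ?thesis
    by (auto simp: eventually_at_top_linorder)
qed

lemma AE_pos_if_cdf_0:
  assumes "cdf M 0 = 0"
  shows "AE x in M. 0 < x"
proof -
  have "{..0} \<in> null_sets M"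
    using assms by (auto simp: cdf_def null_sets_def emeasure_eq_measure)
  from AE_not_in[OF this] show ?thesis by (auto simp: not_le)
qed

text \<open>Layer cake: the mean of max 0 (X - c) is the integral of P(X > y) over y \<ge> c.\<close>
lemma nn_integral_excess_le:
  assumes c: "c \<ge> 1" and \<alpha>: "\<alpha> > 1"
    and tail: "\<And>x. x \<ge> 1 \<Longrightarrow> 1 - cdf M x \<le> x powr (-\<alpha>)"
  shows "(\<integral>\<^sup>+ x. ennreal (max 0 (x - c)) \<partial>M) \<le> ennreal (c powr (1 - \<alpha>) / (\<alpha> - 1))"
proof -
  interpret pair_sigma_finite M lborel
    by (intro pair_sigma_finite.intro prob_space_imp_sigma_finite sigma_finite_lborel)
      (rule prob_space_axioms)
  have meas: "(\<lambda>(x, y). indicator {c..<x} y :: ennreal) \<in> borel_measurable (M \<Otimes>\<^sub>M lborel)"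
  proof -
    have "(\<lambda>(x, y). indicator {c..<x} y :: ennreal) = indicator {p. c \<le> snd p \<and> snd p < fst p}"
      by (auto simp: indicator_def fun_eq_iff)
    moreover have "{p \<in> space (M \<Otimes>\<^sub>M lborel). c \<le> snd p \<and> snd p < fst p} \<in> sets (M \<Otimes>\<^sub>M lborel)"
      by measurable
    ultimately show ?thesis by (simp add: space_pair_measure)
  qed
  have "(\<integral>\<^sup>+ x. ennreal (max 0 (x - c)) \<partial>M) = (\<integral>\<^sup>+ x. \<integral>\<^sup>+ y. indicator {c..<x} y \<partial>lborel \<partial>M)"
    by (intro nn_integral_cong) (auto simp: max_def)
  also have "\<dots> = (\<integral>\<^sup>+ y. \<integral>\<^sup>+ x. indicator {c..<x} y \<partial>M \<partial>lborel)"
    using Fubini'[of "\<lambda>x y. indicator {c..<x} y"] meas by simp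
  also have "\<dots> \<le> (\<integral>\<^sup>+ y. ennreal (y powr (-\<alpha>)) * indicator {c..} y \<partial>lborel)"
  proof (rule nn_integral_mono)
    fix y :: real
    have "(\<integral>\<^sup>+ x. indicator {c..<x} y \<partial>M) = indicator {c..} y * emeasure M {y<..}"
      by (subst nn_integral_cmult_indicator[symmetric])
        (auto intro!: nn_integral_cong simp: indicator_def)
    also have "\<dots> \<le> ennreal (y powr (-\<alpha>)) * indicator {c..} y"
      using tail[of y] c
      by (auto simp: indicator_def emeasure_eq_measure measure_greaterThan intro!: ennreal_leI)
    finally show "(\<integral>\<^sup>+ x. indicator {c..<x} y \<partial>M) \<le> ennreal (y powr (-\<alpha>)) * indicator {c..} y" .
  qed
  also have "\<dots> = ennreal (c powr (1 - \<alpha>) / (\<alpha> - 1))"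
    using c \<alpha> by (intro nn_integral_powr_atLeast) auto
  finally show ?thesis .
qed

lemma
  assumes "c \<ge> 1" and "\<alpha> > 1"
    and "\<And>x. x \<ge> 1 \<Longrightarrow> 1 - cdf M x \<le> x powr (-\<alpha>)"
  shows integrable_excess: "integrable M (\<lambda>x. max 0 (x - c))"
    and integral_excess_le: "(\<integral>x. max 0 (x - c) \<partial>M) \<le> c powr (1 - \<alpha>) / (\<alpha> - 1)"
proof -
  note nn = nn_integral_excess_le[OF assms]
  show "integrable M (\<lambda>x. max 0 (x - c))"
    by (rule integrableI_nonneg) (use nn in \<open>auto simp: top_unique intro: le_less_trans\<close>)
  have "(\<integral>x. max 0 (x - c) \<partial>M) = enn2real (\<integral>\<^sup>+ x. ennreal (max 0 (x - c)) \<partial>M)"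
    by (rule integral_eq_nn_integral) auto
  also have "\<dots> \<le> c powr (1 - \<alpha>) / (\<alpha> - 1)"
    using nn assms by (intro enn2real_leI) auto
  finally show "(\<integral>x. max 0 (x - c) \<partial>M) \<le> c powr (1 - \<alpha>) / (\<alpha> - 1)" .
qed

end

section \<open>The sample space\<close>

definition splice_round :: "nat \<Rightarrow> omega \<Rightarrow> omega \<Rightarrow> omega" where
  "splice_round t \<omega>1 \<omega>2 = (\<lambda>x. if fst x = t then \<omega>2 x else \<omega>1 x)"

definition perturbation_block :: "nat \<Rightarrow> nat \<Rightarrow> nat \<Rightarrow> omega \<Rightarrow> nat \<Rightarrow> real" where
  "perturbation_block d t k \<omega> = (\<lambda>j\<in>{..<d}. \<omega> (t, k, j))"

definition selected :: "nat \<Rightarrow> nat \<Rightarrow> nat \<Rightarrow> nat \<Rightarrow> (nat \<Rightarrow> real) \<Rightarrow> nat \<Rightarrow> omega set" where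
  "selected d m t k lam i = {\<omega>. i \<in> topm d m (\<lambda>j. \<omega> (t, k, j) - lam j)}"

lemma splice_round_other: "s \<noteq> t \<Longrightarrow> splice_round t \<omega>1 \<omega>2 (s, k, j) = \<omega>1 (s, k, j)"
  and splice_round_same: "splice_round t \<omega>1 \<omega>2 (t, k, j) = \<omega>2 (t, k, j)"
  by (auto simp: splice_round_def)

lemma prob_space_Omega: "real_distribution D \<Longrightarrow> prob_space (Omega D)"
  unfolding Omega_def by (intro prob_space_PiM real_distribution.axioms(1))

sublocale real_distribution \<subseteq> Omega: prob_space "Omega M"
  by (rule prob_space_Omega) unfold_locales

context real_distribution
begin

lemma space_Omega [simp]: "space (Omega M) = UNIV"
  unfolding Omega_def by (simp add: space_PiM)

lemma measurable_into_eq_borel: "measurable N M = borel_measurable N"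
  by (rule measurable_cong_sets[OF refl events_eq_borel])

lemma measurable_Omega_coordinate [measurable]: "(\<lambda>\<omega>. \<omega> x) \<in> borel_measurable (Omega M)"
  unfolding Omega_def measurable_into_eq_borel[symmetric]
  by (rule measurable_component_singleton) auto

lemma measurable_product_coordinate: "j \<in> I \<Longrightarrow> (\<lambda>r. r j) \<in> borel_measurable (Pi\<^sub>M I (\<lambda>_. M))"
  unfolding measurable_into_eq_borel[symmetric] by (rule measurable_component_singleton)

lemma measurable_splice_round:
  "(\<lambda>p. splice_round t (fst p) (snd p)) \<in> measurable (Omega M \<Otimes>\<^sub>M Omega M) (Omega M)"
proof -
  have "(\<lambda>p. splice_round t (fst p) (snd p) x) \<in> measurable (Omega M \<Otimes>\<^sub>M Omega M) M" for x
  proof -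
    have x: "(\<lambda>\<omega>. \<omega> x) \<in> measurable (Omega M) M"
      unfolding Omega_def by (rule measurable_component_singleton) auto
    show ?thesis
      using measurable_compose[OF measurable_fst x] measurable_compose[OF measurable_snd x]
      by (cases "fst x = t") (auto simp: splice_round_def)
  qed
  then show ?thesis
    unfolding Omega_def by (intro measurable_PiM_single') (auto simp: space_PiM)
qed

lemma distr_splice_round:
  "distr (Omega M \<Otimes>\<^sub>M Omega M) (Omega M) (\<lambda>p. splice_round t (fst p) (snd p)) = Omega M"
proof -
  interpret PO: product_prob_space "\<lambda>_::nat\<times>nat\<times>nat. M" UNIV
    by unfold_locales
  let ?P = "Pi\<^sub>M UNIV (\<lambda>_::nat\<times>nat\<times>nat. M)"
  let ?emb = "\<lambda>J F. prod_emb UNIV (\<lambda>_. M) J (Pi\<^sub>E J F)"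
  show ?thesis unfolding Omega_def
  proof (rule PO.PiM_eq)
    fix J :: "(nat\<times>nat\<times>nat) set" and F
    assume J: "finite J" and F: "\<And>j. j \<in> J \<Longrightarrow> F j \<in> sets M"
    define J1 where "J1 = {j\<in>J. fst j \<noteq> t}"
    define J2 where "J2 = {j\<in>J. fst j = t}"
    have emb_sets: "?emb K F \<in> sets ?P" and emb_measure: "emeasure ?P (?emb K F) = (\<Prod>j\<in>K. emeasure M (F j))"
      if "K \<subseteq> J" for K
      using that J F by (auto intro!: sets_PiM_I PO.emeasure_PiM_emb intro: finite_subset)
    have emb: "?emb K F = {\<omega>. \<forall>j\<in>K. \<omega> j \<in> F j}" for K
      by (auto simp: prod_emb_def PiE_iff)
    have "(\<lambda>p. splice_round t (fst p) (snd p)) -` ?emb J F \<inter> space (?P \<Otimes>\<^sub>M ?P)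
        = ?emb J1 F \<times> ?emb J2 F"
      unfolding emb by (auto simp: splice_round_def J1_def J2_def space_pair_measure space_PiM)
    then have "emeasure (distr (?P \<Otimes>\<^sub>M ?P) ?P (\<lambda>p. splice_round t (fst p) (snd p))) (?emb J F)
        = emeasure (?P \<Otimes>\<^sub>M ?P) (?emb J1 F \<times> ?emb J2 F)"
      using measurable_splice_round[of t] emb_sets[of J] by (subst emeasure_distr) (auto simp: Omega_def)
    also have "\<dots> = emeasure ?P (?emb J1 F) * emeasure ?P (?emb J2 F)"
      using emb_sets[of J1] emb_sets[of J2] unfolding J1_def J2_def
      by (intro PO.P.emeasure_pair_measure_Times) auto
    also have "\<dots> = (\<Prod>j\<in>J1. emeasure M (F j)) * (\<Prod>j\<in>J2. emeasure M (F j))"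
      by (simp add: emb_measure J1_def J2_def)
    also have "\<dots> = (\<Prod>j\<in>J. emeasure M (F j))"
      using J by (subst prod.union_disjoint[symmetric]) (auto simp: J1_def J2_def intro: arg_cong2[where f = prod])
    finally show "emeasure (distr (?P \<Otimes>\<^sub>M ?P) ?P (\<lambda>p. splice_round t (fst p) (snd p))) (?emb J F)
        = (\<Prod>j\<in>J. emeasure M (F j))" .
  qed simp
qed

lemma nn_integral_splice_round:
  assumes "f \<in> borel_measurable (Omega M)"
  shows "(\<integral>\<^sup>+\<omega>. f \<omega> \<partial>Omega M) = (\<integral>\<^sup>+\<omega>1. \<integral>\<^sup>+\<omega>2. f (splice_round t \<omega>1 \<omega>2) \<partial>Omega M \<partial>Omega M)"
proof -
  have "(\<integral>\<^sup>+\<omega>. f \<omega> \<partial>Omega M)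
      = (\<integral>\<^sup>+\<omega>. f \<omega> \<partial>distr (Omega M \<Otimes>\<^sub>M Omega M) (Omega M) (\<lambda>p. splice_round t (fst p) (snd p)))"
    by (simp add: distr_splice_round)
  also have "\<dots> = (\<integral>\<^sup>+p. f (splice_round t (fst p) (snd p)) \<partial>(Omega M \<Otimes>\<^sub>M Omega M))"
    using assms measurable_splice_round by (intro nn_integral_distr) auto
  also have "\<dots> = (\<integral>\<^sup>+\<omega>1. \<integral>\<^sup>+\<omega>2. f (splice_round t \<omega>1 \<omega>2) \<partial>Omega M \<partial>Omega M)"
    using assms measurable_splice_round[of t] by (subst Omega.nn_integral_fst[symmetric]) auto
  finally show ?thesis .
qed

lemma measurable_perturbation_block:
  "perturbation_block d t k \<in> measurable (Omega M) (Pi\<^sub>M {..<d} (\<lambda>_. M))"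
  unfolding perturbation_block_def Omega_def
  by (intro measurable_restrict measurable_component_singleton) auto

lemma distr_perturbation_block:
  "distr (Omega M) (Pi\<^sub>M {..<d} (\<lambda>_. M)) (perturbation_block d t k) = Pi\<^sub>M {..<d} (\<lambda>_. M)"
  using distr_PiM_reindex[of UNIV "\<lambda>_. M" "\<lambda>j. (t, k, j)" "{..<d}"]
  unfolding Omega_def perturbation_block_def by (auto simp: inj_on_def prob_space_axioms)

lemma indep_vars_coordinates: "Omega.indep_vars (\<lambda>_. M) (\<lambda>x \<omega>. \<omega> x) UNIV"
proof (subst Omega.indep_vars_iff_distr_eq_PiM)
  interpret PO: product_prob_space "\<lambda>_::nat\<times>nat\<times>nat. M" UNIV
    by unfold_locales
  show "(\<lambda>\<omega>. \<omega> x) \<in> measurable (Omega M) M" for x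
    unfolding Omega_def by (rule measurable_component_singleton) auto
  have "(\<lambda>x::omega. \<lambda>i\<in>UNIV. x i) = (\<lambda>x. x)"
    by (auto simp: fun_eq_iff)
  then show "distr (Omega M) (\<Pi>\<^sub>M i\<in>UNIV. M) (\<lambda>x. \<lambda>i\<in>UNIV. x i)
      = (\<Pi>\<^sub>M i\<in>UNIV. distr (Omega M) M (\<lambda>\<omega>. \<omega> i))"
    unfolding Omega_def by (simp add: PO.PiM_component distr_id)
qed simp

lemma indep_vars_perturbation_blocks:
  "Omega.indep_vars (\<lambda>_. Pi\<^sub>M {..<d} (\<lambda>_. M)) (perturbation_block d t) UNIV"
proof -
  define K where "K k = (\<lambda>j. (t, k, j)) ` {..<d}" for k :: nat
  have "Omega.indep_vars (\<lambda>k. Pi\<^sub>M (K k) (\<lambda>_. M)) (\<lambda>k \<omega>. restrict \<omega> (K k)) UNIV"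
    by (rule Omega.indep_vars_restrict[OF indep_vars_coordinates])
      (auto simp: K_def disjoint_family_on_def)
  then have "Omega.indep_vars (\<lambda>_. Pi\<^sub>M {..<d} (\<lambda>_. M))
      (\<lambda>k \<omega>. (\<lambda>f. \<lambda>j\<in>{..<d}. f (t, k, j)) (restrict \<omega> (K k))) UNIV"
    by (rule Omega.indep_vars_compose2)
      (intro measurable_restrict measurable_component_singleton, auto simp: K_def)
  then show ?thesis
    by (rule Omega.indep_vars_cong[THEN iffD1, rotated -1])
      (auto simp: perturbation_block_def K_def fun_eq_iff)
qed

lemma sets_selection:
  "{r \<in> space (Pi\<^sub>M {..<d} (\<lambda>_. M)). i \<in> topm d m (\<lambda>j. r j - lam j)} \<in> sets (Pi\<^sub>M {..<d} (\<lambda>_. M))"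
proof -
  have [measurable]: "(\<lambda>r. r j - lam j) \<in> borel_measurable (Pi\<^sub>M {..<d} (\<lambda>_. M))" if "j < d" for j
    using measurable_product_coordinate[of j "{..<d}"] that by (intro borel_measurable_diff) auto
  show ?thesis by measurable
qed

lemma selected_eq_vimage:
  "selected d m t k lam i = perturbation_block d t k -`
     {r \<in> space (Pi\<^sub>M {..<d} (\<lambda>_. M)). i \<in> topm d m (\<lambda>j. r j - lam j)} \<inter> space (Omega M)"
proof -
  have "topm d m (\<lambda>j. perturbation_block d t k \<omega> j - lam j) = topm d m (\<lambda>j. \<omega> (t, k, j) - lam j)" for \<omega>
    by (rule topm_cong) (simp add: perturbation_block_def)
  then show ?thesis
    by (auto simp: selected_def perturbation_block_def space_PiM)
qed

lemma selected_in_sets [measurable]: "selected d m t k lam i \<in> sets (Omega M)"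
  unfolding selected_eq_vimage by (rule measurable_sets[OF measurable_perturbation_block sets_selection])

lemma prob_selected: "Omega.prob (selected d m t k lam i) = phi d m M lam i"
  unfolding selected_eq_vimage phi_def
  by (subst measure_distr[symmetric, OF measurable_perturbation_block sets_selection])
    (simp add: distr_perturbation_block)

lemma prob_selection_pattern:
  assumes "finite J" "J \<noteq> {}"
  shows "Omega.prob (\<Inter>k\<in>J. if k \<in> Z then selected d m t k lam i else UNIV - selected d m t k lam i)
     = (\<Prod>k\<in>J. if k \<in> Z then phi d m M lam i else 1 - phi d m M lam i)"
proof -
  let ?S = "{r \<in> space (Pi\<^sub>M {..<d} (\<lambda>_. M)). i \<in> topm d m (\<lambda>j. r j - lam j)}"
  define F where "F k = (if k \<in> Z then ?S else space (Pi\<^sub>M {..<d} (\<lambda>_. M)) - ?S)" for k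
  have F: "perturbation_block d t k -` F k \<inter> space (Omega M)
      = (if k \<in> Z then selected d m t k lam i else UNIV - selected d m t k lam i)" for k
    using measurable_space[OF measurable_perturbation_block]
    unfolding selected_eq_vimage F_def by auto
  have "Omega.prob (\<Inter>k\<in>J. perturbation_block d t k -` F k \<inter> space (Omega M))
      = (\<Prod>k\<in>J. Omega.prob (perturbation_block d t k -` F k \<inter> space (Omega M)))"
    using assms sets_selection
    by (intro Omega.indep_varsD[OF indep_vars_perturbation_blocks]) (auto simp: F_def)
  also have "\<dots> = (\<Prod>k\<in>J. if k \<in> Z then phi d m M lam i else 1 - phi d m M lam i)"
  proof (rule prod.cong)
    fix k
    have "Omega.prob (UNIV - selected d m t k lam i) = 1 - phi d m M lam i"
      using Omega.prob_compl[OF selected_in_sets] prob_selected by simp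
    then show "Omega.prob (perturbation_block d t k -` F k \<inter> space (Omega M))
        = (if k \<in> Z then phi d m M lam i else 1 - phi d m M lam i)"
      unfolding F using prob_selected by simp
  qed simp
  finally show ?thesis
    unfolding F .
qed

lemma phi_pos_if_unbounded:
  assumes lt1: "\<And>x. cdf M x < 1" and "i < d" and "1 \<le> m"
  shows "0 < phi d m M lam i"
proof -
  obtain a where gt0: "0 < cdf M a"
    using ex_cdf_pos by blast
  interpret PD: product_prob_space "\<lambda>_::nat. M" "{..<d}"
    by unfold_locales
  let ?R = "Pi\<^sub>M {..<d} (\<lambda>_::nat. M)"
  define S where "S = (\<Sum>j<d. \<bar>lam j\<bar>)"
  have S: "\<bar>lam j\<bar> \<le> S" if "j < d" for j
    unfolding S_def using that by (intro member_le_sum) auto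
  define A where "A j = (if j = i then {a + 2 * S + 1<..} else {..a})" for j
  \<comment> \<open>On this box coordinate i beats every other one by more than the spread of lam.\<close>
  have "Pi\<^sub>E {..<d} A \<subseteq> {r \<in> space ?R. i \<in> topm d m (\<lambda>j. r j - lam j)}"
  proof safe
    fix r assume r: "r \<in> Pi\<^sub>E {..<d} A"
    have rA: "r j \<in> A j" if "j < d" for j
      using r that by (auto simp: PiE_iff)
    have "r j - lam j < r i - lam i" if "j < d" "j \<noteq> i" for j
      using rA[OF that(1)] rA[OF \<open>i < d\<close>] S[OF that(1)] S[OF \<open>i < d\<close>] that(2)
      by (auto simp: A_def)
    then have none: "{j. j < d \<and> (r j - lam j > r i - lam i \<or> (r j - lam j = r i - lam i \<and> j < i))} = {}"
      by force
    show "i \<in> topm d m (\<lambda>j. r j - lam j)"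
      unfolding topm_def mem_Collect_eq using \<open>i < d\<close> \<open>1 \<le> m\<close> by (subst none) simp
    show "r \<in> space ?R"
      using r by (auto simp: space_PiM PiE_iff)
  qed
  then have "measure ?R (Pi\<^sub>E {..<d} A) \<le> phi d m M lam i"
    unfolding phi_def by (intro PD.P.finite_measure_mono sets_selection)
  moreover have "measure ?R (Pi\<^sub>E {..<d} A) = (\<Prod>j<d. measure M (A j))"
    using PD.emeasure_PiM[of "{..<d}" A]
    by (auto simp: A_def PD.P.emeasure_eq_measure emeasure_eq_measure prod_ennreal prod_nonneg)
  moreover have "0 < measure M (A j)" for j
    using lt1 gt0 by (auto simp: A_def measure_greaterThan cdf_def)
  ultimately show ?thesis
    by (metis prod_pos less_le_trans)
qed

end

section \<open>Geometric resampling\<close>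

lemma suminf_indicator_before_first:
  assumes "\<exists>k\<ge>1. P k"
  shows "(\<Sum>n. of_bool (\<forall>k\<in>{1..n}. \<not> P k) :: ennreal) = of_nat (LEAST k. k \<ge> 1 \<and> P k)"
proof -
  define K where "K = (LEAST k. k \<ge> 1 \<and> P k)"
  have K: "K \<ge> 1" "P K"
    using LeastI_ex[of "\<lambda>k. k \<ge> 1 \<and> P k"] assms unfolding K_def by auto
  have less: "\<not> (k \<ge> 1 \<and> P k)" if "k < K" for k
    using that unfolding K_def by (rule not_less_Least)
  have "(\<forall>k\<in>{1..n}. \<not> P k) \<longleftrightarrow> n < K" for n
    using K less by (auto simp: not_less)
  then have "(\<Sum>n. of_bool (\<forall>k\<in>{1..n}. \<not> P k) :: ennreal) = (\<Sum>n<K. 1)"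
    by (subst suminf_finite[of "{..<K}"]) auto
  then show ?thesis
    unfolding K_def by simp
qed

context real_distribution
begin

lemma UNIV_in_sets_Omega [simp]: "UNIV \<in> sets (Omega M)"
  using sets.top[of "Omega M"] by simp

lemma phi_le_1: "phi d m M lam i \<le> 1"
  using prob_selected[of d m 0 0 lam i, symmetric] by simp

lemma AE_reselected:
  assumes p: "0 < phi d m M lam i"
  shows "AE \<omega> in Omega M. \<exists>k\<ge>1. \<omega> \<in> selected d m t k lam i"
proof -
  let ?p = "phi d m M lam i"
  define N where "N = {\<omega>. \<forall>k\<ge>1. \<omega> \<notin> selected d m t k lam i}"
  have "Measurable.pred (Omega M) (\<lambda>\<omega>. \<forall>k\<ge>1. \<omega> \<notin> selected d m t k lam i)"
    by measurable
  then have N: "N \<in> sets (Omega M)"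
    by (simp add: pred_def N_def)
  have "Omega.prob N \<le> (1 - ?p) ^ n" if "n \<ge> 1" for n
  proof -
    have "Omega.prob N \<le> Omega.prob (\<Inter>k\<in>{1..n}.
        if k \<in> {} then selected d m t k lam i else UNIV - selected d m t k lam i)"
      using N that
      by (intro Omega.finite_measure_mono) (auto simp: N_def intro!: sets.Diff sets.finite_INT)
    also have "\<dots> = (1 - ?p) ^ n"
      using prob_selection_pattern[of "{1..n}" "{}"] that by simp
    finally show ?thesis .
  qed
  moreover have "(\<lambda>n. (1 - ?p) ^ n) \<longlonglongrightarrow> 0"
    using p phi_le_1 by (intro LIMSEQ_power_zero) auto
  ultimately have "Omega.prob N \<le> 0"
    by (intro LIMSEQ_le_const) auto
  then have "N \<in> null_sets (Omega M)"
    using N by (intro null_setsI) (simp_all add: Omega.emeasure_eq_measure measure_le_0_iff)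
  then show ?thesis
    by (rule AE_I') (auto simp: N_def)
qed

lemma prob_selected_not_reselected:
  "Omega.prob {\<omega>. \<omega> \<in> selected d m t 0 lam i \<and> (\<forall>k\<in>{1..n}. \<omega> \<notin> selected d m t k lam i)}
    = phi d m M lam i * (1 - phi d m M lam i) ^ n"
proof -
  let ?A = "\<lambda>k. selected d m t k lam i"
  have "{\<omega>. \<omega> \<in> ?A 0 \<and> (\<forall>k\<in>{1..n}. \<omega> \<notin> ?A k)}
      = (\<Inter>k\<in>{0..n}. if k \<in> {0} then ?A k else UNIV - ?A k)"
    by auto
  moreover have "{0..n} = insert 0 {1..n}" "{Suc 0..n} \<inter> - {0} = {Suc 0..n}"
    by auto
  then have "(\<Prod>k\<in>{0..n}. if k \<in> {0} then phi d m M lam i else 1 - phi d m M lam i)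
      = phi d m M lam i * (1 - phi d m M lam i) ^ n"
    by (simp add: prod.If_cases)
  ultimately show ?thesis
    using prob_selection_pattern[of "{0..n}" "{0}"] by simp
qed

text \<open>Given that arm i was played, the resampling count is geometric with success probability
  p = phi d m M lam i; its mean 1/p cancels the probability p of playing i.\<close>
lemma nn_integral_resampling_count:
  assumes p: "0 < phi d m M lam i" and c: "0 \<le> c"
  shows "(\<integral>\<^sup>+\<omega>. ennreal (if \<omega> \<in> selected d m t 0 lam i
      then c * real (if \<exists>k\<ge>1. \<omega> \<in> selected d m t k lam i
        then LEAST k. k \<ge> 1 \<and> \<omega> \<in> selected d m t k lam i else 0)
      else 0) \<partial>Omega M) = ennreal c"
proof -
  let ?p = "phi d m M lam i"
  let ?A = "\<lambda>k. selected d m t k lam i"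
  define B where "B n = {\<omega>. \<omega> \<in> ?A 0 \<and> (\<forall>k\<in>{1..n}. \<omega> \<notin> ?A k)}" for n
  have B [measurable]: "B n \<in> sets (Omega M)" for n
    unfolding B_def by measurable
  have prob_B: "Omega.prob (B n) = ?p * (1 - ?p) ^ n" for n
    unfolding B_def by (rule prob_selected_not_reselected)
  have "AE \<omega> in Omega M. ennreal (if \<omega> \<in> ?A 0 then c * real (if \<exists>k\<ge>1. \<omega> \<in> ?A k
        then LEAST k. k \<ge> 1 \<and> \<omega> \<in> ?A k else 0) else 0) = ennreal c * (\<Sum>n. indicator (B n) \<omega>)"
    using AE_reselected[OF p, of t]
  proof eventually_elim
    case (elim \<omega>)
    show ?case
    proof (cases "\<omega> \<in> ?A 0")
      case True
      then have "(\<Sum>n. indicator (B n) \<omega> :: ennreal) = of_nat (LEAST k. k \<ge> 1 \<and> \<omega> \<in> ?A k)"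
        using suminf_indicator_before_first[of "\<lambda>k. \<omega> \<in> ?A k"] elim
        by (simp add: B_def indicator_def)
      then show ?thesis
        using True elim c by (simp add: ennreal_mult ennreal_of_nat_eq_real_of_nat)
    qed (simp add: B_def)
  qed
  then have "(\<integral>\<^sup>+\<omega>. ennreal (if \<omega> \<in> ?A 0 then c * real (if \<exists>k\<ge>1. \<omega> \<in> ?A k
        then LEAST k. k \<ge> 1 \<and> \<omega> \<in> ?A k else 0) else 0) \<partial>Omega M)
      = ennreal c * (\<Sum>n. emeasure (Omega M) (B n))"
    by (simp add: nn_integral_cong_AE nn_integral_cmult nn_integral_suminf)
  also have "\<dots> = ennreal c * ennreal (\<Sum>n. ?p * (1 - ?p) ^ n)"
    using p phi_le_1
    by (simp add: prob_B Omega.emeasure_eq_measure suminf_ennreal2 summable_geometric)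
  also have "(\<Sum>n. ?p * (1 - ?p) ^ n) = 1"
    using p phi_le_1 by (simp add: suminf_mult summable_geometric suminf_geometric)
  finally show ?thesis by simp
qed

end

section \<open>Unbiasedness of the loss estimates\<close>

lemma est_eq_selected:
  "est d m \<eta> L lt \<omega> t i =
    (if \<omega> \<in> selected d m t 0 (\<lambda>j. \<eta> * L j) i
     then lt i * real (if \<exists>k\<ge>1. \<omega> \<in> selected d m t k (\<lambda>j. \<eta> * L j) i
       then LEAST k. k \<ge> 1 \<and> \<omega> \<in> selected d m t k (\<lambda>j. \<eta> * L j) i else 0)
     else 0)"
  unfolding est_def Kcount_def play_def pert_def selected_def mem_Collect_eq ..

lemma est_cong_round:
  assumes "\<And>k j. \<omega> (t, k, j) = \<omega>' (t, k, j)"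
  shows "est d m \<eta> L lt \<omega> t i = est d m \<eta> L lt \<omega>' t i"
proof -
  have "pert \<omega> t = pert \<omega>' t"
    using assms by (simp add: pert_def fun_eq_iff)
  then show ?thesis
    unfolding est_def Kcount_def by (simp only:)
qed

lemma est_nonneg: "(\<And>j. j < d \<Longrightarrow> 0 \<le> lt j) \<Longrightarrow> 0 \<le> est d m \<eta> L lt \<omega> t i"
  unfolding est_def play_def using topm_subset by fastforce

lemma Lhat_eq_sum_lhat: "Lhat d m \<eta> ell T \<omega> i = (\<Sum>t<T. lhat d m \<eta> ell t \<omega> i)"
  by (induction T) (simp_all add: lhat_def)

context real_distribution
begin

lemma measurable_phi [measurable]:
  assumes "\<And>j. j < d \<Longrightarrow> (\<lambda>x. lam x j) \<in> borel_measurable N"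
  shows "(\<lambda>x. phi d m M (lam x) i) \<in> borel_measurable N"
proof -
  let ?R = "Pi\<^sub>M {..<d} (\<lambda>_::nat. M)"
  interpret R: prob_space ?R
    by (intro prob_space_PiM prob_space_axioms)
  define Q where "Q = {p \<in> space (N \<Otimes>\<^sub>M ?R). i \<in> topm d m (\<lambda>j. snd p j - lam (fst p) j)}"
  have "(\<lambda>p. snd p j - lam (fst p) j) \<in> borel_measurable (N \<Otimes>\<^sub>M ?R)" if "j < d" for j
    using measurable_compose[OF measurable_snd measurable_product_coordinate[of j "{..<d}"]]
      measurable_compose[OF measurable_fst assms[OF that]] that
    by (intro borel_measurable_diff) auto
  then have "Q \<in> sets (N \<Otimes>\<^sub>M ?R)"
    unfolding Q_def using measurable_topm by (simp add: pred_def)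
  then have "(\<lambda>x. enn2real (\<integral>\<^sup>+ r. indicator Q (x, r) \<partial>?R)) \<in> borel_measurable N"
    by (intro borel_measurable_enn2real R.borel_measurable_nn_integral_fst) simp
  moreover have "enn2real (\<integral>\<^sup>+ r. indicator Q (x, r) \<partial>?R) = phi d m M (lam x) i"
    if "x \<in> space N" for x
  proof -
    have "(\<lambda>r. indicator Q (x, r) :: ennreal) = indicator {r \<in> space ?R. i \<in> topm d m (\<lambda>j. r j - lam x j)}"
      using that by (auto simp: Q_def indicator_def fun_eq_iff space_pair_measure)
    then show ?thesis
      using sets_selection by (simp add: phi_def measure_def)
  qed
  ultimately show ?thesis
    using measurable_cong[of N "\<lambda>x. enn2real (\<integral>\<^sup>+ r. indicator Q (x, r) \<partial>?R)"] by simp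
qed

end

lemma nn_integral_eq_imp_integral_eq:
  fixes f g :: "'a \<Rightarrow> real"
  assumes [measurable]: "f \<in> borel_measurable M" and "\<And>x. 0 \<le> f x" "\<And>x. 0 \<le> g x"
    and g: "integrable M g" and eq: "(\<integral>\<^sup>+x. ennreal (f x) \<partial>M) = (\<integral>\<^sup>+x. ennreal (g x) \<partial>M)"
  shows "integrable M f" and "(\<integral>x. f x \<partial>M) = (\<integral>x. g x \<partial>M)"
proof -
  have "(\<integral>\<^sup>+x. ennreal (g x) \<partial>M) < \<infinity>"
    using integrableD(2)[OF g] assms(3) by (simp add: less_top)
  then show "integrable M f"
    using assms(2) eq by (intro integrableI_nonneg) auto
  show "(\<integral>x. f x \<partial>M) = (\<integral>x. g x \<partial>M)"
    using assms g by (simp add: integral_eq_nn_integral eq)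
qed

lemma
  fixes f :: "'i \<Rightarrow> 'j \<Rightarrow> 'a \<Rightarrow> real"
  assumes "\<And>t i. t \<in> S \<Longrightarrow> i \<in> I \<Longrightarrow> integrable M (f t i)"
  shows integrable_sum_sum: "integrable M (\<lambda>\<omega>. \<Sum>t\<in>S. \<Sum>i\<in>I. f t i \<omega>)"
    and integral_sum_sum: "(\<integral>\<omega>. (\<Sum>t\<in>S. \<Sum>i\<in>I. f t i \<omega>) \<partial>M) = (\<Sum>t\<in>S. \<Sum>i\<in>I. \<integral>\<omega>. f t i \<omega> \<partial>M)"
  using assms by (auto intro!: sum.cong simp: Bochner_Integration.integral_sum)

locale ftpl_gr = real_distribution D for D :: "real measure" +
  fixes d m :: nat and \<eta> :: real and ell :: "nat \<Rightarrow> omega \<Rightarrow> nat \<Rightarrow> real"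
  assumes admissible: "admissible_adv d D ell"
    and selection_prob_pos: "\<And>lam i. i < d \<Longrightarrow> 0 < phi d m D lam i"
begin

lemma ell_bounds: "i < d \<Longrightarrow> 0 \<le> ell t \<omega> i \<and> ell t \<omega> i \<le> 1"
  using admissible unfolding admissible_adv_def by blast

lemma ell_measurable [measurable]: "(\<lambda>\<omega>. ell t \<omega> i) \<in> borel_measurable (Omega D)"
  using admissible unfolding admissible_adv_def by blast

lemma ell_depends_on_past:
  "(\<And>s k j. s < t \<Longrightarrow> \<omega> (s, k, j) = \<omega>' (s, k, j)) \<Longrightarrow> ell t \<omega> = ell t \<omega>'"
  using admissible unfolding admissible_adv_def by blast

lemma Lhat_depends_on_past:
  "(\<And>s k j. s < t \<Longrightarrow> \<omega> (s, k, j) = \<omega>' (s, k, j)) \<Longrightarrow> Lhat d m \<eta> ell t \<omega> = Lhat d m \<eta> ell t \<omega>'"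
proof (induction t)
  case (Suc t)
  then have L: "Lhat d m \<eta> ell t \<omega> = Lhat d m \<eta> ell t \<omega>'"
    by simp
  have E: "ell t \<omega> = ell t \<omega>'"
    using Suc.prems by (intro ell_depends_on_past) simp
  show ?case
    using est_cong_round[of \<omega> t \<omega>'] Suc.prems by (simp add: L E fun_eq_iff)
qed simp

lemma lhat_nonneg: "0 \<le> lhat d m \<eta> ell t \<omega> i"
  unfolding lhat_def using ell_bounds by (intro est_nonneg) auto

lemma measurable_est:
  assumes [measurable]: "\<And>j. (\<lambda>\<omega>. L \<omega> j) \<in> borel_measurable (Omega D)"
    and [measurable]: "(\<lambda>\<omega>. lt \<omega> i) \<in> borel_measurable (Omega D)"
  shows "(\<lambda>\<omega>. est d m \<eta> (L \<omega>) (lt \<omega>) \<omega> t i) \<in> borel_measurable (Omega D)"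
proof -
  have [measurable]: "Measurable.pred (Omega D) (\<lambda>\<omega>. i \<in> topm d m (\<lambda>j. \<omega> (t, k, j) - \<eta> * L \<omega> j))" for k
    by measurable
  have "(\<lambda>\<omega>. if \<exists>k. k \<ge> 1 \<and> i \<in> topm d m (\<lambda>j. \<omega> (t, k, j) - \<eta> * L \<omega> j)
      then LEAST k. k \<ge> 1 \<and> i \<in> topm d m (\<lambda>j. \<omega> (t, k, j) - \<eta> * L \<omega> j) else 0)
      \<in> measurable (Omega D) (count_space UNIV)"
    by measurable
  then show ?thesis
    unfolding est_def Kcount_def play_def pert_def by measurable
qed

lemma Lhat_measurable [measurable]: "(\<lambda>\<omega>. Lhat d m \<eta> ell t \<omega> i) \<in> borel_measurable (Omega D)"
proof (induction t arbitrary: i)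
  case (Suc t)
  then show ?case
    using measurable_est[of "Lhat d m \<eta> ell t" "ell t"] by simp
qed simp

lemma lhat_measurable [measurable]: "(\<lambda>\<omega>. lhat d m \<eta> ell t \<omega> i) \<in> borel_measurable (Omega D)"
  unfolding lhat_def by (intro measurable_est) simp_all

lemma wprob_measurable [measurable]: "(\<lambda>\<omega>. wprob d m \<eta> D ell t \<omega> i) \<in> borel_measurable (Omega D)"
  unfolding wprob_def by measurable

lemma wprob_bounds: "0 \<le> wprob d m \<eta> D ell t \<omega> i \<and> wprob d m \<eta> D ell t \<omega> i \<le> 1"
  using phi_le_1 by (simp add: wprob_def phi_def)

lemma action_measurable [measurable]: "Measurable.pred (Omega D) (\<lambda>\<omega>. i \<in> action d m \<eta> ell t \<omega>)"
  unfolding action_def play_def pert_def by measurable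

lemma Lhat_splice_round: "Lhat d m \<eta> ell t (splice_round t \<omega>1 \<omega>2) = Lhat d m \<eta> ell t \<omega>1"
  by (rule Lhat_depends_on_past) (simp add: splice_round_other)

lemma ell_splice_round: "ell t (splice_round t \<omega>1 \<omega>2) = ell t \<omega>1"
  by (rule ell_depends_on_past) (simp add: splice_round_other)

lemma wprob_splice_round: "wprob d m \<eta> D ell t (splice_round t \<omega>1 \<omega>2) i = wprob d m \<eta> D ell t \<omega>1 i"
  unfolding wprob_def Lhat_splice_round ..

lemma lhat_splice_round:
  "lhat d m \<eta> ell t (splice_round t \<omega>1 \<omega>2) i = est d m \<eta> (Lhat d m \<eta> ell t \<omega>1) (ell t \<omega>1) \<omega>2 t i"
  unfolding lhat_def Lhat_splice_round ell_splice_round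
  by (rule est_cong_round) (simp add: splice_round_same)

lemma action_splice_round:
  "action d m \<eta> ell t (splice_round t \<omega>1 \<omega>2) = play d m \<eta> (Lhat d m \<eta> ell t \<omega>1) (pert \<omega>2 t 0)"
proof -
  have "pert (splice_round t \<omega>1 \<omega>2) t 0 = pert \<omega>2 t 0"
    by (simp add: pert_def splice_round_same fun_eq_iff)
  then show ?thesis
    by (simp add: action_def Lhat_splice_round)
qed

lemma nn_integral_est:
  assumes "i < d" "0 \<le> lt i" "0 \<le> w"
  shows "(\<integral>\<^sup>+\<omega>. ennreal (est d m \<eta> L lt \<omega> t i * w) \<partial>Omega D) = ennreal (lt i * w)"
proof -
  let ?A = "\<lambda>k. selected d m t k (\<lambda>j. \<eta> * L j) i"
  have "(\<lambda>\<omega>. ennreal (est d m \<eta> L lt \<omega> t i * w)) = (\<lambda>\<omega>. ennreal (if \<omega> \<in> ?A 0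
      then (lt i * w) * real (if \<exists>k\<ge>1. \<omega> \<in> ?A k then LEAST k. k \<ge> 1 \<and> \<omega> \<in> ?A k else 0)
      else 0))"
    unfolding est_eq_selected by (auto simp: fun_eq_iff mult_ac)
  then show ?thesis
    using nn_integral_resampling_count[OF selection_prob_pos[OF assms(1)], where c = "lt i * w" and t = t] assms
    by simp
qed

lemma nn_integral_played:
  assumes "0 \<le> c"
  shows "(\<integral>\<^sup>+\<omega>. ennreal (if i \<in> play d m \<eta> L (pert \<omega> t 0) then c else 0) \<partial>Omega D)
    = ennreal (c * phi d m D (\<lambda>j. \<eta> * L j) i)"
proof -
  have "(\<lambda>\<omega>. ennreal (if i \<in> play d m \<eta> L (pert \<omega> t 0) then c else 0))
      = (\<lambda>\<omega>. ennreal c * indicator (selected d m t 0 (\<lambda>j. \<eta> * L j) i) \<omega>)"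
    by (auto simp: fun_eq_iff selected_def play_def pert_def indicator_def)
  then show ?thesis
    using assms prob_selected[of d m t 0 "\<lambda>j. \<eta> * L j" i]
    by (simp add: nn_integral_cmult_indicator Omega.emeasure_eq_measure ennreal_mult phi_def)
qed

text \<open>Invariance under splice_round t means that w does not depend on the randomness of
  round t.\<close>
lemma nn_integral_lhat_mult:
  assumes "i < d" and w: "\<And>\<omega>1 \<omega>2. w (splice_round t \<omega>1 \<omega>2) = w \<omega>1" "\<And>\<omega>. 0 \<le> w \<omega>"
    and [measurable]: "w \<in> borel_measurable (Omega D)"
  shows "(\<integral>\<^sup>+\<omega>. ennreal (lhat d m \<eta> ell t \<omega> i * w \<omega>) \<partial>Omega D)
    = (\<integral>\<^sup>+\<omega>. ennreal (ell t \<omega> i * w \<omega>) \<partial>Omega D)"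
proof -
  have "(\<integral>\<^sup>+\<omega>. ennreal (lhat d m \<eta> ell t \<omega> i * w \<omega>) \<partial>Omega D)
      = (\<integral>\<^sup>+\<omega>1. \<integral>\<^sup>+\<omega>2. ennreal (est d m \<eta> (Lhat d m \<eta> ell t \<omega>1) (ell t \<omega>1) \<omega>2 t i * w \<omega>1)
          \<partial>Omega D \<partial>Omega D)"
    by (subst nn_integral_splice_round[of _ t]) (simp_all add: lhat_splice_round w(1))
  also have "\<dots> = (\<integral>\<^sup>+\<omega>1. ennreal (ell t \<omega>1 i * w \<omega>1) \<partial>Omega D)"
    using ell_bounds[OF assms(1)] w(2) by (intro nn_integral_cong nn_integral_est assms(1)) auto
  finally show ?thesis .
qed

lemma nn_integral_played_loss:
  assumes "i < d"
  shows "(\<integral>\<^sup>+\<omega>. ennreal (if i \<in> action d m \<eta> ell t \<omega> then ell t \<omega> i else 0) \<partial>Omega D)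
    = (\<integral>\<^sup>+\<omega>. ennreal (ell t \<omega> i * wprob d m \<eta> D ell t \<omega> i) \<partial>Omega D)"
proof -
  have "(\<integral>\<^sup>+\<omega>. ennreal (if i \<in> action d m \<eta> ell t \<omega> then ell t \<omega> i else 0) \<partial>Omega D)
      = (\<integral>\<^sup>+\<omega>1. \<integral>\<^sup>+\<omega>2. ennreal (if i \<in> play d m \<eta> (Lhat d m \<eta> ell t \<omega>1) (pert \<omega>2 t 0)
          then ell t \<omega>1 i else 0) \<partial>Omega D \<partial>Omega D)"
    by (subst nn_integral_splice_round[of _ t])
      (simp_all add: action_splice_round ell_splice_round cong: if_cong)
  also have "\<dots> = (\<integral>\<^sup>+\<omega>1. ennreal (ell t \<omega>1 i * wprob d m \<eta> D ell t \<omega>1 i) \<partial>Omega D)"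
    using ell_bounds[OF assms] by (intro nn_integral_cong) (simp add: nn_integral_played wprob_def)
  finally show ?thesis .
qed

lemma integrable_ell_mult:
  assumes "i < d" "w \<in> borel_measurable (Omega D)" "\<And>\<omega>. \<bar>w \<omega>\<bar> \<le> 1"
  shows "integrable (Omega D) (\<lambda>\<omega>. ell t \<omega> i * w \<omega>)"
proof -
  have "\<bar>ell t \<omega> i * w \<omega>\<bar> \<le> 1" for \<omega>
    using ell_bounds[OF assms(1)] assms(3)[of \<omega>] by (auto simp: abs_mult intro!: mult_le_one)
  then show ?thesis
    using assms(2) by (intro Omega.integrable_const_bound[where B = 1]) auto
qed

lemma
  assumes "i < d"
  shows integrable_lhat: "integrable (Omega D) (\<lambda>\<omega>. lhat d m \<eta> ell t \<omega> i)"
    and integral_lhat: "(\<integral>\<omega>. lhat d m \<eta> ell t \<omega> i \<partial>Omega D) = (\<integral>\<omega>. ell t \<omega> i \<partial>Omega D)"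
proof -
  have "integrable (Omega D) (\<lambda>\<omega>. ell t \<omega> i * 1)"
    by (rule integrable_ell_mult) (use assms in auto)
  moreover have "(\<integral>\<^sup>+\<omega>. ennreal (lhat d m \<eta> ell t \<omega> i * 1) \<partial>Omega D)
      = (\<integral>\<^sup>+\<omega>. ennreal (ell t \<omega> i * 1) \<partial>Omega D)"
    by (rule nn_integral_lhat_mult) (use assms in auto)
  ultimately show "integrable (Omega D) (\<lambda>\<omega>. lhat d m \<eta> ell t \<omega> i)"
    and "(\<integral>\<omega>. lhat d m \<eta> ell t \<omega> i \<partial>Omega D) = (\<integral>\<omega>. ell t \<omega> i \<partial>Omega D)"
    using nn_integral_eq_imp_integral_eq[where f = "\<lambda>\<omega>. lhat d m \<eta> ell t \<omega> i"
        and g = "\<lambda>\<omega>. ell t \<omega> i" and M = "Omega D"] lhat_nonneg ell_bounds[OF assms]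
    by simp_all
qed

lemma integrable_lhat_mult_wprob:
  assumes "i < d"
  shows "integrable (Omega D) (\<lambda>\<omega>. lhat d m \<eta> ell t \<omega> i * wprob d m \<eta> D ell s \<omega> i)"
  using lhat_nonneg wprob_bounds
  by (intro Bochner_Integration.integrable_bound[OF integrable_lhat[OF assms, of t]])
    (auto intro!: mult_left_le)

lemma
  assumes "i < d"
  shows integrable_played_loss:
      "integrable (Omega D) (\<lambda>\<omega>. if i \<in> action d m \<eta> ell t \<omega> then ell t \<omega> i else 0)"
    and integral_played_loss:
      "(\<integral>\<omega>. (if i \<in> action d m \<eta> ell t \<omega> then ell t \<omega> i else 0) \<partial>Omega D)
        = (\<integral>\<omega>. lhat d m \<eta> ell t \<omega> i * wprob d m \<eta> D ell t \<omega> i \<partial>Omega D)"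
proof -
  let ?w = "\<lambda>\<omega>. wprob d m \<eta> D ell t \<omega> i"
  have ell_w: "integrable (Omega D) (\<lambda>\<omega>. ell t \<omega> i * ?w \<omega>)"
    using wprob_bounds by (intro integrable_ell_mult assms) auto
  have nonneg: "0 \<le> ell t \<omega> i * ?w \<omega>" for \<omega>
    using ell_bounds[OF assms] wprob_bounds by simp
  have played: "integrable (Omega D) (\<lambda>\<omega>. if i \<in> action d m \<eta> ell t \<omega> then ell t \<omega> i else 0)"
    "(\<integral>\<omega>. (if i \<in> action d m \<eta> ell t \<omega> then ell t \<omega> i else 0) \<partial>Omega D)
      = (\<integral>\<omega>. ell t \<omega> i * ?w \<omega> \<partial>Omega D)"
    using nn_integral_eq_imp_integral_eq[OF _ _ nonneg ell_w nn_integral_played_loss[OF assms]]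
      ell_bounds[OF assms] by simp_all
  have "(\<integral>\<omega>. lhat d m \<eta> ell t \<omega> i * ?w \<omega> \<partial>Omega D) = (\<integral>\<omega>. ell t \<omega> i * ?w \<omega> \<partial>Omega D)"
    using nn_integral_eq_imp_integral_eq[OF _ _ nonneg ell_w nn_integral_lhat_mult[OF assms]]
      lhat_nonneg wprob_bounds wprob_splice_round by simp
  then show "integrable (Omega D) (\<lambda>\<omega>. if i \<in> action d m \<eta> ell t \<omega> then ell t \<omega> i else 0)"
    and "(\<integral>\<omega>. (if i \<in> action d m \<eta> ell t \<omega> then ell t \<omega> i else 0) \<partial>Omega D)
      = (\<integral>\<omega>. lhat d m \<eta> ell t \<omega> i * ?w \<omega> \<partial>Omega D)"
    using played by simp_all
qed

end

section \<open>The penalty term\<close>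

context real_distribution
begin

lemma
  shows integrable_sum_topm:
      "integrable (Pi\<^sub>M {..<d} (\<lambda>_. M)) (\<lambda>r. \<Sum>i\<in>topm d m (\<lambda>j. r j - lam j). x i)"
    and integral_sum_topm:
      "(\<integral>r. (\<Sum>i\<in>topm d m (\<lambda>j. r j - lam j). x i) \<partial>Pi\<^sub>M {..<d} (\<lambda>_. M))
        = (\<Sum>i<d. x i * phi d m M lam i)"
proof -
  let ?R = "Pi\<^sub>M {..<d} (\<lambda>_::nat. M)"
  interpret R: prob_space ?R
    by (intro prob_space_PiM prob_space_axioms)
  define S where "S i = {r \<in> space ?R. i \<in> topm d m (\<lambda>j. r j - lam j)}" for i
  have S: "S i \<in> sets ?R" for i
    unfolding S_def by (rule sets_selection)
  have eq: "(\<Sum>i\<in>topm d m (\<lambda>j. r j - lam j). x i) = (\<Sum>i<d. x i * indicator (S i) r)"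
    if "r \<in> space ?R" for r
    unfolding sum_topm_eq_sum_lessThan using that by (intro sum.cong) (auto simp: S_def)
  have ind: "integrable ?R (\<lambda>r. x i * indicator (S i) r)" for i
    using S by (intro integrable_mult_right integrable_real_indicator) (auto simp: R.emeasure_eq_measure)
  show "integrable ?R (\<lambda>r. \<Sum>i\<in>topm d m (\<lambda>j. r j - lam j). x i)"
    by (subst Bochner_Integration.integrable_cong[OF refl eq])
      (assumption, rule Bochner_Integration.integrable_sum, rule ind)
  have "(\<integral>r. (\<Sum>i\<in>topm d m (\<lambda>j. r j - lam j). x i) \<partial>?R) = (\<integral>r. (\<Sum>i<d. x i * indicator (S i) r) \<partial>?R)"
    by (rule Bochner_Integration.integral_cong[OF refl eq])
  also have "\<dots> = (\<Sum>i<d. \<integral>r. x i * indicator (S i) r \<partial>?R)"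
    by (rule Bochner_Integration.integral_sum) (rule ind)
  also have "\<dots> = (\<Sum>i<d. x i * phi d m M lam i)"
    using S by (simp add: R.emeasure_eq_measure S_def phi_def)
  finally show "(\<integral>r. (\<Sum>i\<in>topm d m (\<lambda>j. r j - lam j). x i) \<partial>?R) = (\<Sum>i<d. x i * phi d m M lam i)" .
qed

lemma
  assumes "c \<ge> 1" and "\<alpha> > 1" and "\<And>x. x \<ge> 1 \<Longrightarrow> 1 - cdf M x \<le> x powr (-\<alpha>)"
  shows integrable_sum_excess: "integrable (Pi\<^sub>M {..<d} (\<lambda>_. M)) (\<lambda>r. \<Sum>i<d. max 0 (r i - c))"
    and integral_sum_excess_le:
      "(\<integral>r. (\<Sum>i<d. max 0 (r i - c)) \<partial>Pi\<^sub>M {..<d} (\<lambda>_. M)) \<le> real d * (c powr (1 - \<alpha>) / (\<alpha> - 1))"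
proof -
  let ?R = "Pi\<^sub>M {..<d} (\<lambda>_::nat. M)"
  interpret R: product_prob_space "\<lambda>_::nat. M" "{..<d}"
    by unfold_locales
  have [measurable]: "(\<lambda>x. max 0 (x - c)) \<in> borel_measurable M"
    by (subst measurable_cong_sets[OF events_eq_borel refl]) simp
  have coordinate: "(\<lambda>r. r i) \<in> measurable ?R M" "distr ?R M (\<lambda>r. r i) = M" if "i < d" for i
    using that by (auto intro!: measurable_component_singleton R.PiM_component)
  have excess: "integrable ?R (\<lambda>r. max 0 (r i - c))"
    "(\<integral>r. max 0 (r i - c) \<partial>?R) \<le> c powr (1 - \<alpha>) / (\<alpha> - 1)" if "i < d" for i
    using integrable_excess[OF assms] integral_excess_le[OF assms]
      integrable_distr_eq[OF coordinate(1)[OF that], of "\<lambda>x. max 0 (x - c)"]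
      integral_distr[OF coordinate(1)[OF that], of "\<lambda>x. max 0 (x - c)"]
    by (simp_all add: coordinate(2)[OF that])
  show "integrable ?R (\<lambda>r. \<Sum>i<d. max 0 (r i - c))"
    using excess by (intro Bochner_Integration.integrable_sum) auto
  have "(\<integral>r. (\<Sum>i<d. max 0 (r i - c)) \<partial>?R) = (\<Sum>i<d. \<integral>r. max 0 (r i - c) \<partial>?R)"
    using excess by (intro Bochner_Integration.integral_sum) auto
  also have "\<dots> \<le> (\<Sum>i<d. c powr (1 - \<alpha>) / (\<alpha> - 1))"
    using excess by (intro sum_mono) auto
  finally show "(\<integral>r. (\<Sum>i<d. max 0 (r i - c)) \<partial>?R) \<le> real d * (c powr (1 - \<alpha>) / (\<alpha> - 1))"
    by simp
qed

end

context ftpl_gr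
begin

text \<open>Be-the-leader for a fixed perturbation r, averaged over r: the average turns the leaders
  of round t + 1 into the weights wprob d m \<eta> D ell (Suc t).\<close>
lemma sum_lhat_wprob_Suc_le:
  assumes \<eta>: "\<eta> > 0" and md: "m \<le> d" and A: "A \<in> actions d m" and pos: "AE x in D. 0 < x"
    and \<alpha>: "\<alpha> > 1" and c: "c \<ge> 1" and tail: "\<And>x. x \<ge> 1 \<Longrightarrow> 1 - cdf D x \<le> x powr (-\<alpha>)"
  shows "(\<Sum>t<T. \<Sum>i<d. lhat d m \<eta> ell t \<omega> i * wprob d m \<eta> D ell (Suc t) \<omega> i)
     \<le> (\<Sum>i\<in>A. Lhat d m \<eta> ell T \<omega> i) + (real m * c + real d * (c powr (1 - \<alpha>) / (\<alpha> - 1))) / \<eta>"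
proof -
  let ?R = "Pi\<^sub>M {..<d} (\<lambda>_::nat. D)"
  interpret R: product_prob_space "\<lambda>_::nat. D" "{..<d}"
    by unfold_locales
  let ?L = "\<lambda>s j. Lhat d m \<eta> ell s \<omega> j"
  let ?l = "\<lambda>s j. lhat d m \<eta> ell s \<omega> j"
  define g where "g = (\<lambda>r. \<Sum>s<T. \<Sum>i\<in>topm d m (\<lambda>j. r j - \<eta> * ?L (Suc s) j). ?l s i)"
  define h where "h = (\<lambda>r. real m * c + (\<Sum>i<d. max 0 (r i - c)) + \<eta> * (\<Sum>i\<in>A. ?L T i))"
  have g: "integrable ?R g"
    "(\<integral>r. g r \<partial>?R) = (\<Sum>t<T. \<Sum>i<d. ?l t i * wprob d m \<eta> D ell (Suc t) \<omega> i)"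
    unfolding g_def wprob_def
    by (auto intro!: sum.cong simp: integrable_sum_topm integral_sum_topm Bochner_Integration.integral_sum)
  have h: "integrable ?R h"
    "(\<integral>r. h r \<partial>?R) \<le> real m * c + real d * (c powr (1 - \<alpha>) / (\<alpha> - 1)) + \<eta> * (\<Sum>i\<in>A. ?L T i)"
    using integrable_sum_excess[OF c \<alpha> tail] integral_sum_excess_le[OF c \<alpha> tail]
    by (simp_all add: h_def R.P.prob_space)
  have "AE r in ?R. \<forall>j\<in>{..<d}. 0 < r j"
    by (rule eventually_ball_finite) (auto intro!: R.AE_component pos)
  then have "AE r in ?R. \<eta> * g r \<le> h r"
  proof eventually_elim
    case (elim r)
    have "\<eta> * g r \<le> (\<Sum>i\<in>topm d m (\<lambda>j. r j - \<eta> * ?L 0 j). r i - \<eta> * ?L 0 i) - (\<Sum>i\<in>A. r i - \<eta> * ?L T i)"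
      unfolding g_def by (rule be_the_leader[OF md A]) (simp add: lhat_def)
    moreover have "(\<Sum>i\<in>topm d m (\<lambda>j. r j - \<eta> * ?L 0 j). r i - \<eta> * ?L 0 i) \<le> real m * c + (\<Sum>i<d. max 0 (r i - c))"
      using sum_topm_le_excess[OF md] by simp
    moreover have "0 \<le> (\<Sum>i\<in>A. r i)"
      using A elim unfolding actions_def by (intro sum_nonneg) (auto simp: less_imp_le)
    ultimately show ?case
      unfolding h_def by (simp add: sum_subtractf sum_distrib_left)
  qed
  then have "(\<integral>r. \<eta> * g r \<partial>?R) \<le> (\<integral>r. h r \<partial>?R)"
    using g(1) h(1) by (intro integral_mono_AE) auto
  then have "\<eta> * (\<integral>r. g r \<partial>?R) \<le> (\<integral>r. h r \<partial>?R)"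
    by simp
  then show ?thesis
    using h(2) \<eta> unfolding g(2) by (simp add: field_simps)
qed

lemma integral_total_loss:
  "(\<integral>\<omega>. (\<Sum>t<T. \<Sum>i\<in>action d m \<eta> ell t \<omega>. ell t \<omega> i) \<partial>Omega D)
    = (\<Sum>t<T. \<Sum>i<d. \<integral>\<omega>. lhat d m \<eta> ell t \<omega> i * wprob d m \<eta> D ell t \<omega> i \<partial>Omega D)"
proof -
  have "(\<Sum>i\<in>action d m \<eta> ell t \<omega>. ell t \<omega> i)
      = (\<Sum>i<d. if i \<in> action d m \<eta> ell t \<omega> then ell t \<omega> i else 0)" for t \<omega>
    unfolding action_def play_def by (rule sum_topm_eq_sum_lessThan)
  then have "(\<integral>\<omega>. (\<Sum>t<T. \<Sum>i\<in>action d m \<eta> ell t \<omega>. ell t \<omega> i) \<partial>Omega D)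
      = (\<integral>\<omega>. (\<Sum>t<T. \<Sum>i<d. if i \<in> action d m \<eta> ell t \<omega> then ell t \<omega> i else 0) \<partial>Omega D)"
    by simp
  also have "\<dots> = (\<Sum>t<T. \<Sum>i<d. \<integral>\<omega>. (if i \<in> action d m \<eta> ell t \<omega> then ell t \<omega> i else 0) \<partial>Omega D)"
    by (rule integral_sum_sum) (simp add: integrable_played_loss)
  also have "\<dots> = (\<Sum>t<T. \<Sum>i<d. \<integral>\<omega>. lhat d m \<eta> ell t \<omega> i * wprob d m \<eta> D ell t \<omega> i \<partial>Omega D)"
    by (simp add: integral_played_loss)
  finally show ?thesis .
qed

lemma integral_comparator_loss:
  assumes "A \<subseteq> {..<d}"
  shows "(\<integral>\<omega>. (\<Sum>t<T. \<Sum>i\<in>A. ell t \<omega> i) \<partial>Omega D) = (\<integral>\<omega>. (\<Sum>i\<in>A. Lhat d m \<eta> ell T \<omega> i) \<partial>Omega D)"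
proof -
  have "integrable (Omega D) (\<lambda>\<omega>. ell t \<omega> i)" if "i \<in> A" for t i
    using integrable_ell_mult[of i "\<lambda>_. 1" t] assms that by auto
  then have "(\<integral>\<omega>. (\<Sum>t<T. \<Sum>i\<in>A. ell t \<omega> i) \<partial>Omega D) = (\<Sum>t<T. \<Sum>i\<in>A. \<integral>\<omega>. lhat d m \<eta> ell t \<omega> i \<partial>Omega D)"
    using assms by (simp add: integral_sum_sum integral_lhat subset_iff)
  also have "\<dots> = (\<integral>\<omega>. (\<Sum>i\<in>A. \<Sum>t<T. lhat d m \<eta> ell t \<omega> i) \<partial>Omega D)"
    using assms integral_sum_sum[of A "{..<T}" "Omega D" "\<lambda>i t \<omega>. lhat d m \<eta> ell t \<omega> i"]
    by (auto simp: integrable_lhat sum.swap[of _ A] subset_iff)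
  finally show ?thesis
    by (simp add: Lhat_eq_sum_lhat)
qed

lemma stab_term_eq:
  "stab_term d m \<eta> D ell T =
     (\<Sum>t<T. \<Sum>i<d. \<integral>\<omega>. lhat d m \<eta> ell t \<omega> i * wprob d m \<eta> D ell t \<omega> i \<partial>Omega D)
   - (\<Sum>t<T. \<Sum>i<d. \<integral>\<omega>. lhat d m \<eta> ell t \<omega> i * wprob d m \<eta> D ell (Suc t) \<omega> i \<partial>Omega D)"
proof -
  have "(\<integral>\<omega>. (\<Sum>i<d. lhat d m \<eta> ell t \<omega> i *
      (wprob d m \<eta> D ell t \<omega> i - wprob d m \<eta> D ell (Suc t) \<omega> i)) \<partial>Omega D)
    = (\<Sum>i<d. \<integral>\<omega>. lhat d m \<eta> ell t \<omega> i * wprob d m \<eta> D ell t \<omega> i \<partial>Omega D)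
      - (\<Sum>i<d. \<integral>\<omega>. lhat d m \<eta> ell t \<omega> i * wprob d m \<eta> D ell (Suc t) \<omega> i \<partial>Omega D)" for t
  proof -
    have "integrable (Omega D) (\<lambda>\<omega>. \<Sum>i<d. lhat d m \<eta> ell t \<omega> i * wprob d m \<eta> D ell s \<omega> i)" for s
      by (intro Bochner_Integration.integrable_sum integrable_lhat_mult_wprob) simp
    then show ?thesis
      by (simp add: right_diff_distrib sum_subtractf Bochner_Integration.integral_sum
          integrable_lhat_mult_wprob)
  qed
  then show ?thesis
    unfolding stab_term_def by (simp add: sum_subtractf)
qed

lemma regret_le_penalty:
  assumes \<eta>: "\<eta> > 0" and md: "m \<le> d" and pos: "AE x in D. 0 < x"
    and \<alpha>: "\<alpha> > 1" and c: "c \<ge> 1" and tail: "\<And>x. x \<ge> 1 \<Longrightarrow> 1 - cdf D x \<le> x powr (-\<alpha>)"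
  shows "regret d m \<eta> D ell T
    \<le> stab_term d m \<eta> D ell T + (real m * c + real d * (c powr (1 - \<alpha>) / (\<alpha> - 1))) / \<eta>"
proof -
  let ?comparator = "\<lambda>A. \<integral>\<omega>. (\<Sum>t<T. \<Sum>i\<in>A. ell t \<omega> i) \<partial>Omega D"
  define pen where "pen = (real m * c + real d * (c powr (1 - \<alpha>) / (\<alpha> - 1))) / \<eta>"
  have "finite (actions d m)"
    unfolding actions_def by (rule finite_subset[of _ "Pow {..<d}"]) auto
  moreover have "actions d m \<noteq> {}"
    using topm_in_actions[OF md] by blast
  ultimately have "Min (?comparator ` actions d m) \<in> ?comparator ` actions d m"
    by (intro Min_in) auto
  then obtain A where A: "A \<in> actions d m" and min: "Min (?comparator ` actions d m) = ?comparator A"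
    by auto
  have Ad: "A \<subseteq> {..<d}"
    using A unfolding actions_def by auto
  have next_weights: "integrable (Omega D)
      (\<lambda>\<omega>. \<Sum>t<T. \<Sum>i<d. lhat d m \<eta> ell t \<omega> i * wprob d m \<eta> D ell (Suc t) \<omega> i)"
    by (rule integrable_sum_sum) (simp add: integrable_lhat_mult_wprob)
  have comparator: "integrable (Omega D) (\<lambda>\<omega>. \<Sum>i\<in>A. Lhat d m \<eta> ell T \<omega> i)"
    unfolding Lhat_eq_sum_lhat using Ad
    by (intro Bochner_Integration.integrable_sum integrable_lhat) auto
  have "(\<Sum>t<T. \<Sum>i<d. \<integral>\<omega>. lhat d m \<eta> ell t \<omega> i * wprob d m \<eta> D ell (Suc t) \<omega> i \<partial>Omega D)
      = (\<integral>\<omega>. (\<Sum>t<T. \<Sum>i<d. lhat d m \<eta> ell t \<omega> i * wprob d m \<eta> D ell (Suc t) \<omega> i) \<partial>Omega D)"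
    by (rule integral_sum_sum[symmetric]) (simp add: integrable_lhat_mult_wprob)
  also have "\<dots> \<le> (\<integral>\<omega>. (\<Sum>i\<in>A. Lhat d m \<eta> ell T \<omega> i) + pen \<partial>Omega D)"
    using sum_lhat_wprob_Suc_le[OF \<eta> md A pos \<alpha> c tail] next_weights comparator
    by (intro integral_mono) (auto simp: pen_def)
  also have "\<dots> = (\<integral>\<omega>. (\<Sum>i\<in>A. Lhat d m \<eta> ell T \<omega> i) \<partial>Omega D) + pen"
    using comparator by (simp add: Omega.prob_space[unfolded space_Omega])
  finally show ?thesis
    unfolding regret_def min integral_total_loss integral_comparator_loss[OF Ad] stab_term_eq pen_def
    by simp
qed

end

section \<open>Choosing the scale\<close>

lemma penalty_at_optimal_scale:
  fixes m d \<alpha> :: real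
  assumes m: "m > 0" and dm: "d \<ge> m" and \<alpha>: "\<alpha> > 1"
  defines "c \<equiv> (d / m) powr (1 / \<alpha>)"
  shows "m * c + d * (c powr (1 - \<alpha>) / (\<alpha> - 1)) = \<alpha> / (\<alpha> - 1) * m powr (1 - 1 / \<alpha>) * d powr (1 / \<alpha>)"
proof -
  have d: "d > 0"
    using m dm by linarith
  have "m * c = m powr (1 - 1 / \<alpha>) * d powr (1 / \<alpha>)"
    using m d by (simp add: c_def powr_divide powr_diff)
  moreover have "d * c powr (1 - \<alpha>) = m powr (1 - 1 / \<alpha>) * d powr (1 / \<alpha>)"
  proof -
    have "c powr (1 - \<alpha>) = (d / m) powr (1 / \<alpha> - 1)"
      using \<alpha> by (simp add: c_def powr_powr diff_divide_distrib)
    also have "\<dots> = m powr (1 - 1 / \<alpha>) * d powr (1 / \<alpha> - 1)"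
    proof -
      have "m powr (1 - 1 / \<alpha>) = 1 / m powr (1 / \<alpha> - 1)"
        using powr_minus_divide[of m "1 / \<alpha> - 1"] by simp
      then show ?thesis
        using m d by (simp add: powr_divide)
    qed
    finally show ?thesis
      using d by (simp add: powr_mult_base)
  qed
  ultimately show ?thesis
    using \<alpha> by (simp add: field_simps)
qed
lemma regret_le_heavy_tail:
  assumes D: "real_distribution D" and adv: "admissible_adv d D ell"
    and \<eta>: "\<eta> > 0" and m: "1 \<le> m" "m \<le> d" and \<alpha>: "\<alpha> > 1"
    and cdf_0: "cdf D 0 = 0" and cdf_lt_1: "\<And>x. cdf D x < 1"
    and tail: "\<And>x. x \<ge> 1 \<Longrightarrow> 1 - cdf D x \<le> x powr (-\<alpha>)"
  shows "regret d m \<eta> D ell T \<le> stab_term d m \<eta> D ell T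
     + (\<alpha> / (\<alpha> - 1) * real m powr (1 - 1 / \<alpha>) * real d powr (1 / \<alpha>)) / \<eta>"
proof -
  interpret real_distribution D by fact
  interpret ftpl_gr D d m \<eta> ell
    using adv phi_pos_if_unbounded[OF cdf_lt_1 _ m(1)] by unfold_locales auto
  define c where "c = (real d / real m) powr (1 / \<alpha>)"
  have "c \<ge> 1"
    unfolding c_def using m \<alpha> by (intro ge_one_powr_ge_zero) auto
  moreover have "real m * c + real d * (c powr (1 - \<alpha>) / (\<alpha> - 1))
      = \<alpha> / (\<alpha> - 1) * real m powr (1 - 1 / \<alpha>) * real d powr (1 / \<alpha>)"
    unfolding c_def using m \<alpha> by (intro penalty_at_optimal_scale) auto
  ultimately show ?thesis
    using regret_le_penalty[OF \<eta> m(2) AE_pos_if_cdf_0[OF cdf_0] \<alpha> _ tail, of c T] by simp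
qed

lemma frechet_cdf_tail: "x > 0 \<Longrightarrow> 1 - frechet_cdf \<alpha> x \<le> x powr (-\<alpha>)"
  using exp_ge_add_one_self[of "- (x powr (-\<alpha>))"] by (simp add: frechet_cdf_def)

theorem lemma1:
  fixes d m T :: nat and \<alpha> \<eta> :: real and D :: "real measure"
    and ell :: "nat \<Rightarrow> omega \<Rightarrow> nat \<Rightarrow> real"
  assumes "1 \<le> m" and "m \<le> d" and "\<alpha> > 1" and "\<eta> > 0"
    and "real_distribution D"
    and "admissible_adv d D ell"
  shows "(cdf D = frechet_cdf \<alpha> \<longrightarrow>
           regret d m \<eta> D ell T \<le> stab_term d m \<eta> D ell T
             + ((\<alpha> / (\<alpha> - 1) * real m powr (1 - 1 / \<alpha>) + Gamma (1 - 1 / \<alpha>))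
                  * real (d + 1) powr (1 / \<alpha>) + real m) / \<eta>)
       \<and> (cdf D = pareto_cdf \<alpha> \<longrightarrow>
           regret d m \<eta> D ell T \<le> stab_term d m \<eta> D ell T
             + ((\<alpha> / (\<alpha> - 1) * real m powr (1 - 1 / \<alpha>) + Gamma (1 - 1 / \<alpha>))
                  * real (d + 1) powr (1 / \<alpha>)) / \<eta>)"
proof -
  define K where "K = \<alpha> / (\<alpha> - 1) * real m powr (1 - 1 / \<alpha>)"
  have bound: "regret d m \<eta> D ell T \<le> stab_term d m \<eta> D ell T + K * real d powr (1 / \<alpha>) / \<eta>"
    if "cdf D 0 = 0" "\<And>x. cdf D x < 1" "\<And>x. x \<ge> 1 \<Longrightarrow> 1 - cdf D x \<le> x powr (-\<alpha>)"
    using regret_le_heavy_tail[OF assms(5,6,4,1,2,3) that] by (simp add: K_def)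
  have "K * real d powr (1 / \<alpha>) \<le> (K + Gamma (1 - 1 / \<alpha>)) * real (d + 1) powr (1 / \<alpha>)"
    using \<open>\<alpha> > 1\<close> by (intro mult_mono powr_mono2 less_imp_le[OF Gamma_real_pos]) (auto simp: K_def)
  then have slack: "K * real d powr (1 / \<alpha>) / \<eta>
      \<le> ((K + Gamma (1 - 1 / \<alpha>)) * real (d + 1) powr (1 / \<alpha>) + x) / \<eta>" if "0 \<le> x" for x
    using that \<open>\<eta> > 0\<close> by (intro divide_right_mono) auto
  show ?thesis
    unfolding K_def[symmetric]
  proof (intro conjI impI)
    assume "cdf D = frechet_cdf \<alpha>"
    then show "regret d m \<eta> D ell T \<le> stab_term d m \<eta> D ell T
        + ((K + Gamma (1 - 1 / \<alpha>)) * real (d + 1) powr (1 / \<alpha>) + real m) / \<eta>"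
      using bound frechet_cdf_tail slack[of "real m"] by (force simp: frechet_cdf_def)
  next
    assume "cdf D = pareto_cdf \<alpha>"
    then show "regret d m \<eta> D ell T \<le> stab_term d m \<eta> D ell T
        + ((K + Gamma (1 - 1 / \<alpha>)) * real (d + 1) powr (1 / \<alpha>)) / \<eta>"
      using bound slack[of 0] by (force simp: pareto_cdf_def)
  qed
qed

end
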